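(* Let $n\in\mathbb{N}$ and let $R$ be a $2n$-adically closed ring. If $p,q$ are prime ideals of $R$ (not necessarily distinct), then either $p+q=R$ or $p+q$ is a prime ideal.
   Context: All rings are commutative with $1$; $\mathbb{N}=\{1,2,\dots\}$. A ring $R$ is $k$-adically closed if every monic polynomial of degree $k$ with coefficients in $R$ has a root in $R$. *)

theory Defs
  imports "HOL-Algebra.Algebra"
begin

definition adically_closed :: "nat \<Rightarrow> ('a, 'b) ring_scheme \<Rightarrow> bool" where
  "adically_closed k R \<longleftrightarrow>
     (\<forall>a \<in> {..<k} \<rightarrow> carrier R. \<exists>x \<in> carrier R.
        x [^]\<^bsub>R\<^esub> k \<oplus>\<^bsub>R\<^esub> (\<Oplus>\<^bsub>R\<^esub> i\<in>{..<k}. a i \<otimes>\<^bsub>R\<^esub> x [^]\<^bsub>R\<^esub> i) = \<zero>\<^bsub>R\<^esub>)"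

end

theory Submission
  imports Defs
begin

(* Let a, b be elements with a b in P + Q, say a b = p + q with
   p in P and q in Q, and consider the quadratic f(X) = X (X - (a + b)) + q.
   Then  (X - a)(X - b) = f(X) + p  and  X (X - (a + b)) = f(X) - q.
   The power f(X)^n is a monic polynomial of degree 2n, so by 2n-adic closedness
   f(x)^n = 0 for some x; as prime ideals are radical, f(x) lies in P and in Q.
   Hence P contains x - a or x - b and Q contains x or x - (a + b); in each of
   the four cases a or b is a sum of an element of P and an element of Q, so
   P + Q is prime unless it is the whole ring. *)

definition poly_fun_below :: "('a, 'b) ring_scheme \<Rightarrow> nat \<Rightarrow> ('a \<Rightarrow> 'a) \<Rightarrow> bool" where
  "poly_fun_below R d h \<longleftrightarrow> (\<exists>a\<in>{..<d} \<rightarrow> carrier R. \<forall>x\<in>carrier R.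
      h x = (\<Oplus>\<^bsub>R\<^esub> i\<in>{..<d}. a i \<otimes>\<^bsub>R\<^esub> x [^]\<^bsub>R\<^esub> i))"

definition monic_fun :: "('a, 'b) ring_scheme \<Rightarrow> nat \<Rightarrow> ('a \<Rightarrow> 'a) \<Rightarrow> bool" where
  "monic_fun R d f \<longleftrightarrow> (\<exists>h. poly_fun_below R d h \<and>
      (\<forall>x\<in>carrier R. f x = x [^]\<^bsub>R\<^esub> d \<oplus>\<^bsub>R\<^esub> h x))"

context cring
begin

lemma poly_fun_belowE:
  assumes "poly_fun_below R d h"
  obtains a where "a \<in> {..<d} \<rightarrow> carrier R"
    and "\<And>x. x \<in> carrier R \<Longrightarrow> h x = (\<Oplus>i\<in>{..<d}. a i \<otimes> x [^] i)"
  using assms unfolding poly_fun_below_def by blast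

lemma poly_fun_below_closed:
  "poly_fun_below R d h \<Longrightarrow> x \<in> carrier R \<Longrightarrow> h x \<in> carrier R"
  by (elim poly_fun_belowE) (auto intro!: finsum_closed)

lemma poly_fun_below_zero: "poly_fun_below R d (\<lambda>x. \<zero>)"
  unfolding poly_fun_below_def by (intro bexI[of _ "\<lambda>i. \<zero>"]) auto

lemma poly_fun_below_add:
  assumes "poly_fun_below R d g" "poly_fun_below R d h"
  shows "poly_fun_below R d (\<lambda>x. g x \<oplus> h x)"
proof -
  obtain a where a: "a \<in> {..<d} \<rightarrow> carrier R"
    and g: "\<And>x. x \<in> carrier R \<Longrightarrow> g x = (\<Oplus>i\<in>{..<d}. a i \<otimes> x [^] i)"
    using assms(1) by (rule poly_fun_belowE) (rule that)
  obtain b where b: "b \<in> {..<d} \<rightarrow> carrier R"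
    and h: "\<And>x. x \<in> carrier R \<Longrightarrow> h x = (\<Oplus>i\<in>{..<d}. b i \<otimes> x [^] i)"
    using assms(2) by (rule poly_fun_belowE) (rule that)
  show ?thesis unfolding poly_fun_below_def
  proof (intro bexI[of _ "\<lambda>i. a i \<oplus> b i"] ballI)
    fix x assume x: "x \<in> carrier R"
    have "(\<Oplus>i\<in>{..<d}. (a i \<oplus> b i) \<otimes> x [^] i)
        = (\<Oplus>i\<in>{..<d}. a i \<otimes> x [^] i \<oplus> b i \<otimes> x [^] i)"
      using a b x by (intro finsum_cong') (auto intro: l_distr)
    also have "\<dots> = g x \<oplus> h x"
      using a b x by (simp add: finsum_addf g h Pi_iff)
    finally show "g x \<oplus> h x = (\<Oplus>i\<in>{..<d}. (a i \<oplus> b i) \<otimes> x [^] i)" by simp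
  qed (use a b in auto)
qed

lemma poly_fun_below_scale:
  assumes "poly_fun_below R d h" "c \<in> carrier R"
  shows "poly_fun_below R d (\<lambda>x. h x \<otimes> c)"
proof -
  obtain a where a: "a \<in> {..<d} \<rightarrow> carrier R"
    and h: "\<And>x. x \<in> carrier R \<Longrightarrow> h x = (\<Oplus>i\<in>{..<d}. a i \<otimes> x [^] i)"
    using assms(1) by (rule poly_fun_belowE) (rule that)
  show ?thesis unfolding poly_fun_below_def
  proof (intro bexI[of _ "\<lambda>i. a i \<otimes> c"] ballI)
    fix x assume x: "x \<in> carrier R"
    have "h x \<otimes> c = (\<Oplus>i\<in>{..<d}. a i \<otimes> x [^] i \<otimes> c)"
      using a x assms(2) by (simp add: h finsum_ldistr Pi_iff)
    also have "\<dots> = (\<Oplus>i\<in>{..<d}. a i \<otimes> c \<otimes> x [^] i)"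
      using a x assms(2) by (intro finsum_cong') (auto simp: m_ac Pi_iff)
    finally show "h x \<otimes> c = (\<Oplus>i\<in>{..<d}. a i \<otimes> c \<otimes> x [^] i)" .
  qed (use a assms(2) in auto)
qed

lemma finsum_lessThan_Suc_update:
  assumes "a \<in> {..<d} \<rightarrow> carrier R" "c \<in> carrier R" "x \<in> carrier R"
  shows "(\<Oplus>i\<in>{..<Suc d}. (a(d := c)) i \<otimes> x [^] i)
       = c \<otimes> x [^] d \<oplus> (\<Oplus>i\<in>{..<d}. a i \<otimes> x [^] i)"
proof -
  have "(\<Oplus>i\<in>{..<d}. (a(d := c)) i \<otimes> x [^] i) = (\<Oplus>i\<in>{..<d}. a i \<otimes> x [^] i)"
    using assms by (intro finsum_cong') auto
  then show ?thesis
    using assms by (subst lessThan_Suc, subst finsum_insert) (auto simp: Pi_iff)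
qed

lemma poly_fun_below_Suc:
  assumes "poly_fun_below R d h"
  shows "poly_fun_below R (Suc d) h"
proof -
  obtain a where a: "a \<in> {..<d} \<rightarrow> carrier R"
    and h: "\<And>x. x \<in> carrier R \<Longrightarrow> h x = (\<Oplus>i\<in>{..<d}. a i \<otimes> x [^] i)"
    using assms by (rule poly_fun_belowE) (rule that)
  show ?thesis unfolding poly_fun_below_def
  proof (intro bexI[of _ "a(d := \<zero>)"] ballI)
    fix x assume "x \<in> carrier R"
    then show "h x = (\<Oplus>i\<in>{..<Suc d}. (a(d := \<zero>)) i \<otimes> x [^] i)"
      using a by (simp only: finsum_lessThan_Suc_update zero_closed) (simp add: h finsum_closed Pi_iff)
  qed (use a in \<open>auto simp: Pi_iff\<close>)
qed

lemma monic_fun_below_Suc: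
  assumes "monic_fun R d f"
  shows "poly_fun_below R (Suc d) f"
proof -
  obtain h where h_below: "poly_fun_below R d h"
    and f: "\<And>x. x \<in> carrier R \<Longrightarrow> f x = x [^] d \<oplus> h x"
    using assms unfolding monic_fun_def by blast
  obtain a where a: "a \<in> {..<d} \<rightarrow> carrier R"
    and h: "\<And>x. x \<in> carrier R \<Longrightarrow> h x = (\<Oplus>i\<in>{..<d}. a i \<otimes> x [^] i)"
    using h_below by (rule poly_fun_belowE) (rule that)
  show ?thesis unfolding poly_fun_below_def
  proof (intro bexI[of _ "a(d := \<one>)"] ballI)
    fix x assume "x \<in> carrier R"
    then show "f x = (\<Oplus>i\<in>{..<Suc d}. (a(d := \<one>)) i \<otimes> x [^] i)"
      using a by (simp only: finsum_lessThan_Suc_update one_closed) (simp add: f h)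
  qed (use a in \<open>auto simp: Pi_iff\<close>)
qed

lemma poly_fun_below_mult_var:
  assumes "poly_fun_below R d h"
  shows "poly_fun_below R (Suc d) (\<lambda>x. h x \<otimes> x)"
proof -
  obtain a where a: "a \<in> {..<d} \<rightarrow> carrier R"
    and h: "\<And>x. x \<in> carrier R \<Longrightarrow> h x = (\<Oplus>i\<in>{..<d}. a i \<otimes> x [^] i)"
    using assms by (rule poly_fun_belowE) (rule that)
  define b where "b = (\<lambda>i. if i = 0 then \<zero> else a (i - 1))"
  have b: "b \<in> {..<Suc d} \<rightarrow> carrier R" using a by (fastforce simp: b_def)
  show ?thesis unfolding poly_fun_below_def
  proof (intro bexI[OF _ b] ballI)
    fix x assume x: "x \<in> carrier R"
    have "(\<Oplus>i\<in>{..<Suc d}. b i \<otimes> x [^] i)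
        = b 0 \<otimes> x [^] (0::nat) \<oplus> (\<Oplus>i\<in>Suc ` {..<d}. b i \<otimes> x [^] i)"
      unfolding lessThan_Suc_eq_insert_0 using b x by (subst finsum_insert) (auto simp: Pi_iff)
    also have "\<dots> = (\<Oplus>i\<in>Suc ` {..<d}. b i \<otimes> x [^] i)"
    proof -
      have "(\<Oplus>i\<in>Suc ` {..<d}. b i \<otimes> x [^] i) \<in> carrier R"
        using b x by (intro finsum_closed) (auto simp: Pi_iff)
      then show ?thesis by (simp add: b_def)
    qed
    also have "\<dots> = (\<Oplus>i\<in>{..<d}. b (Suc i) \<otimes> x [^] Suc i)"
      using b x by (subst finsum_reindex) (auto simp: Pi_iff)
    also have "\<dots> = (\<Oplus>i\<in>{..<d}. a i \<otimes> x [^] i \<otimes> x)"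
      using a x by (intro finsum_cong') (auto simp: b_def m_assoc Pi_iff)
    also have "\<dots> = h x \<otimes> x"
      using a x by (simp add: h finsum_ldistr Pi_iff)
    finally show "h x \<otimes> x = (\<Oplus>i\<in>{..<Suc d}. b i \<otimes> x [^] i)" by simp
  qed
qed

lemma monic_fun_mult_quadratic:
  assumes f: "monic_fun R d f" and s: "s \<in> carrier R" and t: "t \<in> carrier R"
  shows "monic_fun R (d + 2) (\<lambda>x. f x \<otimes> (x \<otimes> x \<oplus> (s \<otimes> x \<oplus> t)))"
proof -
  obtain h where h: "poly_fun_below R d h"
    and f_eq: "\<And>x. x \<in> carrier R \<Longrightarrow> f x = x [^] d \<oplus> h x"
    using f unfolding monic_fun_def by blast
  define g where "g = (\<lambda>x. h x \<otimes> x \<otimes> x \<oplus> (f x \<otimes> x \<otimes> s \<oplus> f x \<otimes> t))"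
  have f1: "poly_fun_below R (Suc d) f" using f by (rule monic_fun_below_Suc)
  have "poly_fun_below R (d + 2) g"
    unfolding g_def numeral_2_eq_2 add_Suc_right add_0_right
    by (intro poly_fun_below_add poly_fun_below_scale poly_fun_below_mult_var
        poly_fun_below_Suc f1 h s t)
  moreover have "f x \<otimes> (x \<otimes> x \<oplus> (s \<otimes> x \<oplus> t)) = x [^] (d + 2) \<oplus> g x"
    if x: "x \<in> carrier R" for x
  proof -
    have hx: "h x \<in> carrier R" using h x by (rule poly_fun_below_closed)
    have "x [^] (d + 2) = x [^] d \<otimes> x \<otimes> x"
      using x by (simp add: numeral_2_eq_2 nat_pow_Suc)
    then show ?thesis
      unfolding g_def f_eq[OF x] using x hx s t nat_pow_closed[OF x, of d] by algebra
  qed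
  ultimately show ?thesis unfolding monic_fun_def by blast
qed

lemma monic_fun_quadratic_power:
  assumes s: "s \<in> carrier R" and t: "t \<in> carrier R"
  shows "monic_fun R (2 * n) (\<lambda>x. (x \<otimes> x \<oplus> (s \<otimes> x \<oplus> t)) [^] n)"
proof (induction n)
  case 0
  show ?case unfolding monic_fun_def
    by (intro exI[of _ "\<lambda>x. \<zero>"]) (auto simp: poly_fun_below_zero)
next
  case (Suc n)
  have "monic_fun R (2 * n + 2) (\<lambda>x. (x \<otimes> x \<oplus> (s \<otimes> x \<oplus> t)) [^] n \<otimes> (x \<otimes> x \<oplus> (s \<otimes> x \<oplus> t)))"
    using Suc.IH s t by (rule monic_fun_mult_quadratic)
  then show ?case unfolding monic_fun_def by simp
qed

lemma adically_closed_monic_fun_root: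
  assumes "adically_closed d R" "monic_fun R d f"
  obtains x where "x \<in> carrier R" "f x = \<zero>"
proof -
  obtain h where h: "poly_fun_below R d h"
    and f: "\<And>x. x \<in> carrier R \<Longrightarrow> f x = x [^] d \<oplus> h x"
    using assms(2) unfolding monic_fun_def by blast
  obtain a where a: "a \<in> {..<d} \<rightarrow> carrier R"
    and h_eq: "\<And>x. x \<in> carrier R \<Longrightarrow> h x = (\<Oplus>i\<in>{..<d}. a i \<otimes> x [^] i)"
    using h by (rule poly_fun_belowE) (rule that)
  then show ?thesis
    using assms(1) that unfolding adically_closed_def by (auto simp: f h_eq)
qed

end

lemma (in primeideal) pow_mem_imp_mem:
  assumes "x \<in> carrier R" "x [^] (k::nat) \<in> I"
  shows "x \<in> I"
  using assms(2)
proof (induction k)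
  case 0
  then have "\<one> \<otimes> x \<in> I" using assms(1) by (intro I_r_closed) auto
  then show ?case using assms(1) by simp
next
  case (Suc k)
  then have "x [^] k \<otimes> x \<in> I" by (simp add: nat_pow_Suc)
  then have "x [^] k \<in> I \<or> x \<in> I" using assms(1) by (intro I_prime) auto
  then show ?case using Suc.IH by blast
qed

lemma (in cring) prime_sum_split:
  fixes P Q :: "'a set" and a b p q x :: 'a
  assumes P: "primeideal P R" and Q: "primeideal Q R"
    and a: "a \<in> carrier R" and b: "b \<in> carrier R"
    and p: "p \<in> P" and q: "q \<in> Q" and ab: "a \<otimes> b = p \<oplus> q"
    and x: "x \<in> carrier R"
    and fP: "x \<otimes> (x \<ominus> (a \<oplus> b)) \<oplus> q \<in> P" and fQ: "x \<otimes> (x \<ominus> (a \<oplus> b)) \<oplus> q \<in> Q"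
  shows "a \<in> P <+> Q \<or> b \<in> P <+> Q"
proof -
  interpret P: primeideal P R by (fact P)
  interpret Q: primeideal Q R by (fact Q)
  have pc: "p \<in> carrier R" using p P.a_subset by blast
  have qc: "q \<in> carrier R" using q Q.a_subset by blast
  have sum_mem: "u \<oplus> v \<in> P <+> Q" if "u \<in> P" "v \<in> Q" for u v
    using that unfolding set_add_def' by blast
  have "(x \<ominus> a) \<otimes> (x \<ominus> b) = (x \<otimes> (x \<ominus> (a \<oplus> b)) \<oplus> q) \<oplus> p"
    using a b x pc qc ab by algebra
  also have "\<dots> \<in> P" by (rule P.a_closed[OF fP p])
  finally have "(x \<ominus> a) \<otimes> (x \<ominus> b) \<in> P" .
  then have split_P: "x \<ominus> a \<in> P \<or> x \<ominus> b \<in> P"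
    using a b x by (intro P.I_prime) auto
  have "x \<otimes> (x \<ominus> (a \<oplus> b)) = (x \<otimes> (x \<ominus> (a \<oplus> b)) \<oplus> q) \<oplus> \<ominus> q"
    using a b x qc by algebra
  also have "\<dots> \<in> Q" by (rule Q.a_closed[OF fQ Q.a_inv_closed[OF q]])
  finally have "x \<otimes> (x \<ominus> (a \<oplus> b)) \<in> Q" .
  then have split_Q: "x \<in> Q \<or> x \<ominus> (a \<oplus> b) \<in> Q"
    using a b x by (intro Q.I_prime) auto
  have "a = \<ominus> (x \<ominus> a) \<oplus> x" "b = \<ominus> (x \<ominus> b) \<oplus> x"
    "b = (x \<ominus> a) \<oplus> \<ominus> (x \<ominus> (a \<oplus> b))" "a = (x \<ominus> b) \<oplus> \<ominus> (x \<ominus> (a \<oplus> b))"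
    using a b x by algebra+
  then show ?thesis
    using split_P split_Q sum_mem P.a_inv_closed Q.a_inv_closed by metis
qed

theorem mainTheorem3:
  fixes R (structure) and n :: nat and P Q :: "'a set"
  assumes "cring R"
    and "n \<ge> 1"
    and "adically_closed (2 * n) R"
    and "primeideal P R"
    and "primeideal Q R"
  shows "P <+>\<^bsub>R\<^esub> Q = carrier R \<or> primeideal (P <+>\<^bsub>R\<^esub> Q) R"
proof (cases "P <+> Q = carrier R")
  case proper: False
  interpret cring R by fact
  interpret P: primeideal P R by fact
  interpret Q: primeideal Q R by fact
  have "primeideal (P <+> Q) R"
  proof (rule primeidealI[OF add_ideals[OF P.is_ideal Q.is_ideal] \<open>cring R\<close>])
    show "carrier R \<noteq> P <+> Q" using proper by simp
  next
    fix a b assume a: "a \<in> carrier R" and b: "b \<in> carrier R" and "a \<otimes> b \<in> P <+> Q"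
    then obtain p q where p: "p \<in> P" and q: "q \<in> Q" and ab: "a \<otimes> b = p \<oplus> q"
      unfolding set_add_def' by blast
    have qc: "q \<in> carrier R" using q Q.a_subset by blast
    let ?f = "\<lambda>x. x \<otimes> x \<oplus> (\<ominus> (a \<oplus> b) \<otimes> x \<oplus> q)"
    have "monic_fun R (2 * n) (\<lambda>x. ?f x [^] n)"
      using a b qc by (intro monic_fun_quadratic_power) auto
    then obtain x where x: "x \<in> carrier R" and root: "?f x [^] n = \<zero>"
      using assms(3) by (elim adically_closed_monic_fun_root)
    have f_eq: "?f x = x \<otimes> (x \<ominus> (a \<oplus> b)) \<oplus> q"
      using a b x qc by algebra
    have f_closed: "?f x \<in> carrier R" using a b x qc by simp
    have "?f x [^] n \<in> P" "?f x [^] n \<in> Q"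
      unfolding root by (simp_all add: additive_subgroup.zero_closed
          P.additive_subgroup_axioms Q.additive_subgroup_axioms)
    then have "?f x \<in> P" "?f x \<in> Q"
      using P.pow_mem_imp_mem Q.pow_mem_imp_mem f_closed by blast+
    then show "a \<in> P <+> Q \<or> b \<in> P <+> Q"
      using prime_sum_split[OF assms(4,5) a b p q ab x] f_eq by simp
  qed
  then show ?thesis by simp
qed (simp)

end
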